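(* Let $f:\mathbb{R}^n\times\mathbb{R}^m\to\mathbb{R}^n$ be a polynomial map and let $\boldsymbol\psi:\mathbb{R}^n\to\mathbb{R}^m$ be a function whose graph satisfies \[ \{(x,\boldsymbol\psi(x)) : x\in\mathbb{R}^n\} = \{(x,u) \mid \exists\,\lambda\in\mathbb{R}^{n_\lambda}\ \text{s.t.}\ g(x,u,\lambda)\ge 0,\ h(x,u,\lambda)=0\} \] for vector-valued polynomial maps $g,h$. Write $\xi=(x,u,\lambda,x^+,u^+,\lambda^+)$. Suppose there exist a polynomial $V(x,u,\lambda)$, (vectors of) sum-of-squares polynomials $\sigma_0(\xi),\sigma_1(\xi),\sigma_2(\xi),\bar\sigma_0(x,u,\lambda),\bar\sigma_1(x,u,\lambda)$ and (vectors of) arbitrary polynomials $p_1(\xi),p_2(\xi),p_3(\xi),\bar p_1(x,u,\lambda)$ of compatible dimensions such that the polynomial identities \[ V(x,u,\lambda) - V(x^+,u^+,\lambda^+) - \|x\|_2^2 = \sigma_0(\xi) + \sigma_1(\xi)^\top g(x,u,\lambda) + \sigma_2(\xi)^\top g(x^+,u^+,\lambda^+) + p_1(\xi)^\top h(x,u,\lambda) + p_2(\xi)^\top h(x^+,u^+,\lambda^+) + p_3(\xi)^\top(x^+ - f(x,u)), \] \[ V(x,u,\lambda) = \bar\sigma_0(x,u,\lambda) + \bar\sigma_1(x,u,\lambda)^\top g(x,u,\lambda) + \bar p_1(x,u,\lambda)^\top h(x,u,\lambda) \] hold. Then: (1) the closed-loop system $x_{k+1}=f(x_k,\boldsymbol\psi(x_k))$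 is globally attractive, i.e., $x_k\to0$ for all initial conditions; (2) if in addition the function $x\mapsto\inf\{\|u\|_2+\|\lambda\|_2\mid g(x,u,\lambda)\ge0,\ h(x,u,\lambda)=0\}$ is bounded on some neighborhood of the origin, or $V$ does not depend on $(u,\lambda)$, then the closed-loop system is globally asymptotically stable.
   Context: A polynomial is sum-of-squares (SOS) if it is a finite sum of squares of polynomials; a vector of SOS polynomials has SOS entries. The closed-loop system is globally asymptotically stable if (i) for all initial conditions $x_0$, $\lim_{k\to\infty}x_k=0$, and (ii) for every $\epsilon>0$ there exists $\delta>0$ such that $\|x_0\|_2\le\delta$ implies $\|x_k\|_2\le\epsilon$ for all $k$. *)

theory Defs
  imports "HOL-Analysis.Analysis"
begin

inductive poly_fun :: "('a::euclidean_space \<Rightarrow> real) \<Rightarrow> bool" where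
  const: "poly_fun (\<lambda>x. c)"
| coord: "b \<in> Basis \<Longrightarrow> poly_fun (\<lambda>x. x \<bullet> b)"
| add: "poly_fun p \<Longrightarrow> poly_fun q \<Longrightarrow> poly_fun (\<lambda>x. p x + q x)"
| mult: "poly_fun p \<Longrightarrow> poly_fun q \<Longrightarrow> poly_fun (\<lambda>x. p x * q x)"

definition sos_fun :: "('a::euclidean_space \<Rightarrow> real) \<Rightarrow> bool" where
  "sos_fun p \<longleftrightarrow> (\<exists>qs. (\<forall>q\<in>set qs. poly_fun q) \<and> p = (\<lambda>x. \<Sum>q\<leftarrow>qs. (q x)\<^sup>2))"

definition poly_map :: "('a::euclidean_space \<Rightarrow> real ^ 'k) \<Rightarrow> bool" where
  "poly_map F \<longleftrightarrow> (\<forall>i. poly_fun (\<lambda>x. F x $ i))"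

definition sos_map :: "('a::euclidean_space \<Rightarrow> real ^ 'k) \<Rightarrow> bool" where
  "sos_map F \<longleftrightarrow> (\<forall>i. sos_fun (\<lambda>x. F x $ i))"

definition cl_traj :: "((real^'n) \<times> (real^'m) \<Rightarrow> real^'n) \<Rightarrow> (real^'n \<Rightarrow> real^'m)
    \<Rightarrow> real^'n \<Rightarrow> nat \<Rightarrow> real^'n" where
  "cl_traj f psi x0 k = ((\<lambda>x. f (x, psi x)) ^^ k) x0"

definition GAS :: "(real^'n \<Rightarrow> nat \<Rightarrow> real^'n) \<Rightarrow> bool" where
  "GAS traj \<longleftrightarrow>
     (\<forall>x0. traj x0 \<longlonglongrightarrow> 0) \<and>
     (\<forall>\<epsilon>>0. \<exists>\<delta>>0. \<forall>x0. norm x0 \<le> \<delta> \<longrightarrow> (\<forall>k. norm (traj x0 k) \<le> \<epsilon>))"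

end

theory Submission
  imports Defs
begin

text \<open>The two certificates say that \<open>V\<close> is nonnegative on the feasible set
  \<open>S = {(x, u, \<lambda>). g \<ge> 0, h = 0}\<close>, whose projection to \<open>(x, u)\<close> is the graph of \<open>\<psi>\<close>,
  and that \<open>V\<close> drops by at least \<open>\<parallel>x\<parallel>\<^sup>2\<close> along every step of the closed loop, whatever
  multipliers \<open>\<lambda>\<close> are chosen to lift the two states into \<open>S\<close>. Telescoping gives
  \<open>\<Sum>\<^sub>k \<parallel>x\<^sub>k\<parallel>\<^sup>2 \<le> V(x\<^sub>0, \<psi> x\<^sub>0, \<lambda>\<^sub>0)\<close>, hence \<open>x\<^sub>k \<rightarrow> 0\<close>.

  Stability follows once \<open>V\<close> is nearly constant on lifts of points near the origin, since
  \<open>\<parallel>x\<^sub>k\<parallel>\<^sup>2\<close> is bounded by the drop of \<open>V\<close> between lifts of \<open>x\<^sub>0\<close> and of a later, small \<open>x\<^sub>K\<close>.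
  If \<open>V\<close> depends on \<open>x\<close> only, this is continuity. If the multipliers are locally bounded,
  the bounded lifts over a ball form a compact set; its projection is the graph of \<open>\<psi>\<close>,
  which is therefore continuous there. So \<open>0\<close> is a fixed point of the closed loop, the
  decrease condition at \<open>x = 0\<close> makes \<open>V\<close> constant on the lifts of \<open>0\<close>, and compactness
  spreads this to nearby lifts.\<close>

lemma poly_fun_continuous: "poly_fun p \<Longrightarrow> continuous_on UNIV p"
  by (induction rule: poly_fun.induct) (auto intro!: continuous_intros)

lemma poly_map_continuous:
  assumes "poly_map F"
  shows "continuous_on UNIV F"
proof -
  have "continuous_on UNIV (\<lambda>x. \<chi> i. F x $ i)"
    using assms unfolding poly_map_def by (intro continuous_on_vec_lambda poly_fun_continuous) auto
  then show ?thesis by simp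
qed

lemma sos_fun_nonneg: "sos_fun p \<Longrightarrow> 0 \<le> p x"
  unfolding sos_fun_def by (auto intro!: sum_list_nonneg)

lemma sos_map_inner_nonneg:
  assumes "sos_map F" and "\<And>i. 0 \<le> a $ i"
  shows "0 \<le> F x \<bullet> a"
  using assms sos_fun_nonneg[of "\<lambda>x. F x $ i" for i] unfolding sos_map_def inner_vec_def
  by (auto intro!: sum_nonneg)

lemma closed_feasible_set:
  fixes g :: "'a::topological_space \<Rightarrow> real^'k" and h :: "'a \<Rightarrow> 'b::{t2_space,zero}"
  assumes "continuous_on UNIV g" and "continuous_on UNIV h"
  shows "closed {z. (\<forall>i. 0 \<le> g z $ i) \<and> h z = 0}"
  using assms
  by (intro closed_Collect_conj closed_Collect_all closed_Collect_le closed_Collect_eq)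
     (auto intro!: continuous_intros)

lemma orbit_limit_fixed_point:
  assumes "isCont F a" and "(\<lambda>k. (F ^^ k) x) \<longlonglongrightarrow> a"
  shows "F a = a"
proof -
  have "(\<lambda>k. F ((F ^^ k) x)) \<longlonglongrightarrow> F a"
    using assms by (rule isCont_tendsto_compose)
  moreover have "(\<lambda>k. F ((F ^^ k) x)) \<longlonglongrightarrow> a"
    using LIMSEQ_Suc[OF assms(2)] by simp
  ultimately show ?thesis by (rule LIMSEQ_unique)
qed

lemma compact_near_zero_fibre:
  fixes p :: "'b::t2_space \<Rightarrow> 'a::{real_normed_vector,heine_borel}" and V :: "'b \<Rightarrow> real"
  assumes "compact C" and "continuous_on C V" and "continuous_on C p"
    and "\<And>z. z \<in> C \<Longrightarrow> p z = 0 \<Longrightarrow> V z = c" and "\<eta> > 0"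
  shows "\<exists>d>0. \<forall>z\<in>C. norm (p z) < d \<longrightarrow> \<bar>V z - c\<bar> < \<eta>"
proof -
  define K where "K = C \<inter> (\<lambda>z. \<bar>V z - c\<bar>) -` {\<eta>..}"
  have "closed K"
    unfolding K_def using assms(1,2)
    by (intro continuous_closed_preimage) (auto intro!: continuous_intros compact_imp_closed)
  then have "compact K"
    using compact_Int_closed[OF assms(1)] by (metis K_def Int_assoc Int_absorb)
  then have "compact (p ` K)"
    using assms(3) unfolding K_def by (auto intro: compact_continuous_image continuous_on_subset)
  moreover have "0 \<notin> p ` K"
    using assms(4,5) unfolding K_def by auto
  ultimately obtain d where "d > 0" and "\<And>y. y \<in> p ` K \<Longrightarrow> d \<le> dist 0 y"
    using separate_point_closed compact_imp_closed by metis
  then show ?thesis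
    unfolding K_def by (intro exI[of _ d]) (force simp: not_le[symmetric])
qed

definition Lyapunov_stable :: "('a::real_normed_vector \<Rightarrow> 'a) \<Rightarrow> bool" where
  "Lyapunov_stable F \<longleftrightarrow>
     (\<forall>\<epsilon>>0. \<exists>\<delta>>0. \<forall>x. norm x \<le> \<delta> \<longrightarrow> (\<forall>k. norm ((F ^^ k) x) \<le> \<epsilon>))"

locale lifted_Lyapunov_function =
  fixes F :: "'a::real_normed_vector \<Rightarrow> 'a" and L :: "'a \<Rightarrow> 'b set" and V :: "'b \<Rightarrow> real"
  assumes lifts_nonempty: "L x \<noteq> {}"
    and nonneg: "z \<in> L x \<Longrightarrow> 0 \<le> V z"
    and decrease: "z \<in> L x \<Longrightarrow> z' \<in> L (F x) \<Longrightarrow> (norm x)\<^sup>2 \<le> V z - V z'"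
begin

lemma sum_norm_orbit_le:
  assumes "z \<in> L x" and "z' \<in> L ((F ^^ Suc K) x)"
  shows "(\<Sum>k\<le>K. (norm ((F ^^ k) x))\<^sup>2) \<le> V z - V z'"
  using assms
proof (induction K arbitrary: x z)
  case 0
  then show ?case by (simp add: decrease)
next
  case (Suc K)
  obtain z1 where z1: "z1 \<in> L (F x)"
    using lifts_nonempty by blast
  have "(\<Sum>k\<le>K. (norm ((F ^^ k) (F x)))\<^sup>2) \<le> V z1 - V z'"
    using Suc.IH[OF z1] Suc.prems(2) by (simp only: funpow_Suc_right comp_def)
  moreover have "(norm x)\<^sup>2 \<le> V z - V z1"
    using decrease[OF Suc.prems(1) z1] .
  moreover have "(\<Sum>k\<le>Suc K. (norm ((F ^^ k) x))\<^sup>2)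
      = (norm x)\<^sup>2 + (\<Sum>k\<le>K. (norm ((F ^^ k) (F x)))\<^sup>2)"
    by (simp only: sum.atMost_Suc_shift funpow_Suc_right comp_def funpow_0)
  ultimately show ?case
    by linarith
qed

lemma orbit_tendsto_zero: "(\<lambda>k. (F ^^ k) x) \<longlonglongrightarrow> 0"
proof -
  obtain z where z: "z \<in> L x"
    using lifts_nonempty by blast
  have "(\<Sum>k<K. (norm ((F ^^ k) x))\<^sup>2) \<le> V z" for K
  proof (cases K)
    case (Suc K')
    obtain z' where z': "z' \<in> L ((F ^^ Suc K') x)"
      using lifts_nonempty by blast
    show ?thesis
      using sum_norm_orbit_le[OF z z'] nonneg[OF z'] Suc by (simp add: lessThan_Suc_atMost)
  qed (simp add: nonneg[OF z])
  then have "summable (\<lambda>k. (norm ((F ^^ k) x))\<^sup>2)"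
    by (intro summableI_nonneg_bounded) auto
  then have "(\<lambda>k. sqrt ((norm ((F ^^ k) x))\<^sup>2)) \<longlonglongrightarrow> sqrt 0"
    by (intro tendsto_real_sqrt summable_LIMSEQ_zero)
  then show ?thesis
    by (simp add: tendsto_norm_zero_iff)
qed

lemma Lyapunov_stable_if_near_level:
  assumes near: "\<And>\<eta>. \<eta> > 0 \<Longrightarrow> \<exists>d>0. \<forall>x. norm x < d \<longrightarrow> (\<exists>z\<in>L x. \<bar>V z - c\<bar> < \<eta>)"
  shows "Lyapunov_stable F"
  unfolding Lyapunov_stable_def
proof (intro allI impI)
  fix \<epsilon> :: real
  assume "\<epsilon> > 0"
  then obtain d where "d > 0" and d: "\<And>x. norm x < d \<Longrightarrow> \<exists>z\<in>L x. \<bar>V z - c\<bar> < \<epsilon>\<^sup>2 / 2"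
    using near[of "\<epsilon>\<^sup>2 / 2"] by auto
  have "norm ((F ^^ k) x) \<le> \<epsilon>" if x: "norm x \<le> d / 2" for x k
  proof -
    obtain z where z: "z \<in> L x" "\<bar>V z - c\<bar> < \<epsilon>\<^sup>2 / 2"
      using d[of x] \<open>d > 0\<close> x by auto
    have "\<forall>\<^sub>F K in sequentially. norm ((F ^^ K) x) < d"
      using order_tendstoD(2)[OF tendsto_norm_zero[OF orbit_tendsto_zero] \<open>d > 0\<close>] by simp
    then obtain K where "k \<le> K" and "norm ((F ^^ Suc K) x) < d"
      unfolding eventually_sequentially by (metis le_Suc_eq nat_le_linear)
    then obtain z' where z': "z' \<in> L ((F ^^ Suc K) x)" "\<bar>V z' - c\<bar> < \<epsilon>\<^sup>2 / 2"
      using d by blast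
    have "(norm ((F ^^ k) x))\<^sup>2 \<le> (\<Sum>j\<le>K. (norm ((F ^^ j) x))\<^sup>2)"
      using \<open>k \<le> K\<close> by (intro member_le_sum) auto
    also have "\<dots> \<le> V z - V z'"
      using sum_norm_orbit_le[OF z(1) z'(1)] .
    also have "\<dots> < \<epsilon>\<^sup>2"
      using z(2) z'(2) by linarith
    finally show ?thesis
      using \<open>\<epsilon> > 0\<close> by (simp add: power_less_imp_less_base less_imp_le)
  qed
  then show "\<exists>\<delta>>0. \<forall>x. norm x \<le> \<delta> \<longrightarrow> (\<forall>k. norm ((F ^^ k) x) \<le> \<epsilon>)"
    using \<open>d > 0\<close> by (intro exI[of _ "d / 2"]) auto
qed

end

locale lifted_closed_loop =
  fixes f :: "'a::euclidean_space \<times> 'b::euclidean_space \<Rightarrow> 'a" and psi :: "'a \<Rightarrow> 'b"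
    and S :: "('a \<times> 'b \<times> 'c::euclidean_space) set" and V :: "'a \<times> 'b \<times> 'c \<Rightarrow> real"
  assumes closed_S: "closed S"
    and graph: "{(x, psi x) | x. True} = {(x, u). \<exists>lam. (x, u, lam) \<in> S}"
    and f_continuous: "continuous_on UNIV f"
    and V_continuous: "continuous_on UNIV V"
    and V_nonneg: "z \<in> S \<Longrightarrow> 0 \<le> V z"
    and V_decrease: "(x, u, lam) \<in> S \<Longrightarrow> (f (x, u), u', lam') \<in> S \<Longrightarrow>
      (norm x)\<^sup>2 \<le> V (x, u, lam) - V (f (x, u), u', lam')"
begin

definition closed_loop :: "'a \<Rightarrow> 'a" where
  "closed_loop x = f (x, psi x)"

definition lifts :: "'a \<Rightarrow> ('a \<times> 'b \<times> 'c) set" where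
  "lifts x = {z \<in> S. fst z = x}"

lemma feasible_imp_eq_psi:
  assumes "(x, u, lam) \<in> S"
  shows "u = psi x"
proof -
  have "(x, u) \<in> {(x, u). \<exists>lam. (x, u, lam) \<in> S}"
    using assms by blast
  then show ?thesis
    unfolding graph[symmetric] by blast
qed

lemma ex_feasible_lift: "\<exists>lam. (x, psi x, lam) \<in> S"
proof -
  have "(x, psi x) \<in> {(x, psi x) | x. True}"
    by blast
  then show ?thesis
    unfolding graph by blast
qed

sublocale lifted_Lyapunov_function closed_loop lifts V
proof
  show "lifts x \<noteq> {}" for x
    using ex_feasible_lift unfolding lifts_def by force
  show "0 \<le> V z" if "z \<in> lifts x" for z x
    using that V_nonneg unfolding lifts_def by blast
  fix z z' x
  assume "z \<in> lifts x" and "z' \<in> lifts (closed_loop x)"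
  obtain u lam where z: "z = (x, u, lam)" "(x, u, lam) \<in> S"
    using \<open>z \<in> lifts x\<close> unfolding lifts_def by (cases z) auto
  then have "closed_loop x = f (x, u)"
    unfolding closed_loop_def using feasible_imp_eq_psi[OF z(2)] by simp
  then obtain u' lam' where z': "z' = (f (x, u), u', lam')" "(f (x, u), u', lam') \<in> S"
    using \<open>z' \<in> lifts (closed_loop x)\<close> unfolding lifts_def by (cases z') auto
  show "(norm x)\<^sup>2 \<le> V z - V z'"
    unfolding z z' using V_decrease[OF z(2) z'(2)] .
qed

lemma Lyapunov_stable_if_V_independent:
  assumes "\<And>x u lam u' lam'. V (x, u, lam) = V (x, u', lam')"
  shows "Lyapunov_stable closed_loop"
proof (rule Lyapunov_stable_if_near_level)
  fix \<eta> :: real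
  assume "\<eta> > 0"
  have "continuous_on UNIV (\<lambda>x. V (x, 0, 0))"
    by (intro continuous_on_compose2[OF V_continuous] continuous_intros) auto
  then have "isCont (\<lambda>x. V (x, 0, 0)) 0"
    by (simp add: continuous_on_eq_continuous_at)
  then obtain d where "d > 0" and d: "\<And>x. dist x 0 < d \<Longrightarrow> \<bar>V (x, 0, 0) - V (0, 0, 0)\<bar> < \<eta>"
    using \<open>\<eta> > 0\<close> unfolding continuous_at_eps_delta dist_real_def by blast
  have "\<exists>z\<in>lifts x. \<bar>V z - V (0, 0, 0)\<bar> < \<eta>" if "norm x < d" for x
  proof -
    obtain lam where "(x, psi x, lam) \<in> lifts x"
      using ex_feasible_lift unfolding lifts_def by auto
    then show ?thesis
      using d[of x] that assms by (metis dist_0_norm dist_commute)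
  qed
  then show "\<exists>d>0. \<forall>x. norm x < d \<longrightarrow> (\<exists>z\<in>lifts x. \<bar>V z - V (0, 0, 0)\<bar> < \<eta>)"
    using \<open>d > 0\<close> by blast
qed

lemma V_constant_on_zero_fibre:
  assumes "closed_loop 0 = 0" and "(0, u, lam) \<in> S" and "(0, u', lam') \<in> S"
  shows "V (0, u, lam) = V (0, u', lam')"
proof -
  have "f (0, u) = 0" "f (0, u') = 0"
    using assms(1) feasible_imp_eq_psi[OF assms(2)] feasible_imp_eq_psi[OF assms(3)]
    unfolding closed_loop_def by simp_all
  then show ?thesis
    using V_decrease[OF assms(2), of u' lam'] V_decrease[OF assms(3), of u lam] assms(2,3)
    by simp
qed

context
  fixes r B :: real
  assumes r_pos: "r > 0"
    and multipliers_bounded: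
      "\<And>x. norm x < r \<Longrightarrow> \<bar>Inf {norm u + norm lam | u lam. (x, u, lam) \<in> S}\<bar> \<le> B"
begin

lemma bounded_feasible_lift:
  assumes "norm x < r"
  shows "\<exists>lam. (x, psi x, lam) \<in> S \<and> norm (psi x) \<le> B + 1 \<and> norm lam \<le> B + 1"
proof -
  let ?M = "{norm u + norm lam | u lam. (x, u, lam) \<in> S}"
  have "?M \<noteq> {}"
    using ex_feasible_lift by blast
  moreover have "Inf ?M < B + 1"
    using multipliers_bounded[OF assms] by linarith
  ultimately have "\<exists>s\<in>?M. s < B + 1"
    by (rule cInf_lessD)
  then obtain u lam where u: "(x, u, lam) \<in> S" and "norm u + norm lam < B + 1"
    by blast
  then have "norm u \<le> B + 1" and "norm lam \<le> B + 1"
    using norm_ge_zero[of u] norm_ge_zero[of lam] by linarith+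
  then show ?thesis
    using u feasible_imp_eq_psi[OF u] by blast
qed

definition bounded_lifts :: "('a \<times> 'b \<times> 'c) set" where
  "bounded_lifts = S \<inter> cball 0 (r / 2) \<times> cball 0 (B + 1) \<times> cball 0 (B + 1)"

lemma compact_bounded_lifts: "compact bounded_lifts"
  unfolding bounded_lifts_def
  by (intro closed_Int_compact closed_S compact_Times compact_cball)

lemma bounded_lift_near_zero:
  assumes "norm x \<le> r / 2"
  shows "\<exists>lam. (x, psi x, lam) \<in> bounded_lifts"
  using bounded_feasible_lift[of x] assms r_pos unfolding bounded_lifts_def by auto

lemma psi_continuous_near_zero: "continuous_on (cball 0 (r / 2)) psi"
proof (rule continuous_from_closed_graph[of "cball 0 (B + 1)"])
  let ?proj = "\<lambda>(x, u, lam). (x, u)"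
  show "psi \<in> cball 0 (r / 2) \<rightarrow> cball 0 (B + 1)"
  proof
    fix x :: 'a
    assume "x \<in> cball 0 (r / 2)"
    then obtain lam where "(x, psi x, lam) \<in> bounded_lifts"
      using bounded_lift_near_zero by auto
    then show "psi x \<in> cball 0 (B + 1)"
      unfolding bounded_lifts_def by auto
  qed
  have "(\<lambda>x. (x, psi x)) ` cball 0 (r / 2) = ?proj ` bounded_lifts"
  proof (intro equalityI subsetI)
    fix y
    assume "y \<in> (\<lambda>x. (x, psi x)) ` cball 0 (r / 2)"
    then obtain x where "y = (x, psi x)" and "x \<in> cball 0 (r / 2)"
      by auto
    moreover obtain lam where "(x, psi x, lam) \<in> bounded_lifts"
      using bounded_lift_near_zero \<open>x \<in> cball 0 (r / 2)\<close> by auto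
    ultimately show "y \<in> ?proj ` bounded_lifts"
      by (auto intro: rev_image_eqI)
  next
    fix y
    assume "y \<in> ?proj ` bounded_lifts"
    then obtain x u lam where "y = (x, u)" and "(x, u, lam) \<in> bounded_lifts"
      by auto
    then show "y \<in> (\<lambda>x. (x, psi x)) ` cball 0 (r / 2)"
      unfolding bounded_lifts_def using feasible_imp_eq_psi by auto
  qed
  moreover have "compact (?proj ` bounded_lifts)"
    using compact_bounded_lifts
    by (intro compact_continuous_image) (auto simp: case_prod_unfold intro!: continuous_intros)
  ultimately show "closed ((\<lambda>x. (x, psi x)) ` cball 0 (r / 2))"
    by (simp add: compact_imp_closed)
qed simp

lemma closed_loop_zero: "closed_loop 0 = 0"
proof -
  have "continuous_on (cball 0 (r / 2)) closed_loop"
    unfolding closed_loop_def using psi_continuous_near_zero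
    by (intro continuous_on_compose2[OF f_continuous] continuous_intros) auto
  then have "isCont closed_loop 0"
    using r_pos by (intro continuous_on_interior) auto
  then show ?thesis
    by (rule orbit_limit_fixed_point[OF _ orbit_tendsto_zero])
qed

lemma Lyapunov_stable_if_bounded_multipliers: "Lyapunov_stable closed_loop"
proof -
  obtain lam0 where lam0: "(0, psi 0, lam0) \<in> S"
    using ex_feasible_lift by blast
  let ?c = "V (0, psi 0, lam0)"
  have level: "V z = ?c" if "z \<in> bounded_lifts" and "fst z = 0" for z
    using that V_constant_on_zero_fibre[OF closed_loop_zero _ lam0] unfolding bounded_lifts_def
    by (cases z) auto
  show ?thesis
  proof (rule Lyapunov_stable_if_near_level)
    fix \<eta> :: real
    assume "\<eta> > 0"
    have "continuous_on bounded_lifts V"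
      using V_continuous by (rule continuous_on_subset) simp
    moreover have "continuous_on bounded_lifts fst"
      by (intro continuous_intros)
    ultimately obtain d where "d > 0"
      and d: "\<forall>z\<in>bounded_lifts. norm (fst z) < d \<longrightarrow> \<bar>V z - ?c\<bar> < \<eta>"
      using compact_near_zero_fibre[of bounded_lifts V fst ?c \<eta>] compact_bounded_lifts level
        \<open>\<eta> > 0\<close> by blast
    have "\<exists>z\<in>lifts x. \<bar>V z - ?c\<bar> < \<eta>" if x: "norm x < min d (r / 2)" for x
    proof -
      obtain lam where lam: "(x, psi x, lam) \<in> bounded_lifts"
        using bounded_lift_near_zero[of x] x by auto
      then have "(x, psi x, lam) \<in> lifts x"
        unfolding lifts_def bounded_lifts_def by simp
      moreover have "\<bar>V (x, psi x, lam) - ?c\<bar> < \<eta>"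
        using d lam x by auto
      ultimately show ?thesis ..
    qed
    then show "\<exists>d>0. \<forall>x. norm x < d \<longrightarrow> (\<exists>z\<in>lifts x. \<bar>V z - ?c\<bar> < \<eta>)"
      using \<open>d > 0\<close> r_pos by (intro exI[of _ "min d (r / 2)"]) auto
  qed
qed

end

end

theorem theorem2:
  fixes f :: "(real^'n) \<times> (real^'m) \<Rightarrow> (real^'n)"
    and psi :: "(real^'n) \<Rightarrow> (real^'m)"
    and g :: "(real^'n) \<times> (real^'m) \<times> (real^'l) \<Rightarrow> (real^'g)"
    and h :: "(real^'n) \<times> (real^'m) \<times> (real^'l) \<Rightarrow> (real^'h)"
    and V :: "(real^'n) \<times> (real^'m) \<times> (real^'l) \<Rightarrow> real"
    and \<sigma>0 :: "((real^'n) \<times> (real^'m) \<times> (real^'l)) \<times> ((real^'n) \<times> (real^'m) \<times> (real^'l)) \<Rightarrow> real"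
    and \<sigma>1 \<sigma>2 :: "((real^'n) \<times> (real^'m) \<times> (real^'l)) \<times> ((real^'n) \<times> (real^'m) \<times> (real^'l)) \<Rightarrow> (real^'g)"
    and p1 p2 :: "((real^'n) \<times> (real^'m) \<times> (real^'l)) \<times> ((real^'n) \<times> (real^'m) \<times> (real^'l)) \<Rightarrow> (real^'h)"
    and p3 :: "((real^'n) \<times> (real^'m) \<times> (real^'l)) \<times> ((real^'n) \<times> (real^'m) \<times> (real^'l)) \<Rightarrow> (real^'n)"
    and s0 :: "(real^'n) \<times> (real^'m) \<times> (real^'l) \<Rightarrow> real"
    and s1 :: "(real^'n) \<times> (real^'m) \<times> (real^'l) \<Rightarrow> (real^'g)"
    and q1 :: "(real^'n) \<times> (real^'m) \<times> (real^'l) \<Rightarrow> (real^'h)"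
  assumes f_poly: "poly_map f"
    and g_poly: "poly_map g"
    and h_poly: "poly_map h"
    and graph: "{(x, psi x) | x. True} =
      {(x, u). \<exists>lam. (\<forall>i. g (x, u, lam) $ i \<ge> 0) \<and> h (x, u, lam) = 0}"
    and V_poly: "poly_fun V"
    and sos: "sos_fun \<sigma>0" "sos_map \<sigma>1" "sos_map \<sigma>2" "sos_fun s0" "sos_map s1"
    and polys: "poly_map p1" "poly_map p2" "poly_map p3" "poly_map q1"
    and decrease: "\<And>x u lam x' u' lam'.
      V (x, u, lam) - V (x', u', lam') - (norm x)\<^sup>2 =
        \<sigma>0 ((x, u, lam), (x', u', lam'))
        + \<sigma>1 ((x, u, lam), (x', u', lam')) \<bullet> g (x, u, lam)
        + \<sigma>2 ((x, u, lam), (x', u', lam')) \<bullet> g (x', u', lam')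
        + p1 ((x, u, lam), (x', u', lam')) \<bullet> h (x, u, lam)
        + p2 ((x, u, lam), (x', u', lam')) \<bullet> h (x', u', lam')
        + p3 ((x, u, lam), (x', u', lam')) \<bullet> (x' - f (x, u))"
    and nonneg: "\<And>x u lam.
      V (x, u, lam) = s0 (x, u, lam) + s1 (x, u, lam) \<bullet> g (x, u, lam)
        + q1 (x, u, lam) \<bullet> h (x, u, lam)"
  shows "(\<forall>x0. cl_traj f psi x0 \<longlonglongrightarrow> 0) \<and>
    (((\<exists>r>0. \<exists>B. \<forall>x. norm x < r \<longrightarrow>
         \<bar>Inf {norm u + norm lam | u lam. (\<forall>i. g (x, u, lam) $ i \<ge> 0) \<and> h (x, u, lam) = 0}\<bar> \<le> B)
      \<or> (\<forall>x u lam u' lam'. V (x, u, lam) = V (x, u', lam')))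
     \<longrightarrow> GAS (cl_traj f psi))"
proof -
  let ?S = "{z. (\<forall>i. 0 \<le> g z $ i) \<and> h z = 0}"
  interpret lifted_closed_loop f psi ?S V
  proof
    show "closed ?S"
      using g_poly h_poly by (intro closed_feasible_set poly_map_continuous)
    show "{(x, psi x) | x. True} = {(x, u). \<exists>lam. (x, u, lam) \<in> ?S}"
      using graph by simp
    show "continuous_on UNIV f"
      using f_poly by (rule poly_map_continuous)
    show "continuous_on UNIV V"
      using V_poly by (rule poly_fun_continuous)
    show "0 \<le> V z" if "z \<in> ?S" for z
      using that nonneg[of "fst z" "fst (snd z)" "snd (snd z)"]
        sos_fun_nonneg[OF sos(4)] sos_map_inner_nonneg[OF sos(5)]
      by auto
    show "(norm x)\<^sup>2 \<le> V (x, u, lam) - V (f (x, u), u', lam')"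
      if "(x, u, lam) \<in> ?S" and "(f (x, u), u', lam') \<in> ?S" for x u lam u' lam'
    proof -
      let ?\<xi> = "((x, u, lam), (f (x, u), u', lam'))"
      have "0 \<le> \<sigma>1 ?\<xi> \<bullet> g (x, u, lam)" and "0 \<le> \<sigma>2 ?\<xi> \<bullet> g (f (x, u), u', lam')"
        using that by (auto intro!: sos_map_inner_nonneg[OF sos(2)] sos_map_inner_nonneg[OF sos(3)])
      then show ?thesis
        using that decrease[of x u lam "f (x, u)" u' lam'] sos_fun_nonneg[OF sos(1), of ?\<xi>]
        by simp
    qed
  qed
  have traj: "cl_traj f psi = (\<lambda>x k. (closed_loop ^^ k) x)"
    by (simp add: fun_eq_iff cl_traj_def closed_loop_def[abs_def])
  have "Lyapunov_stable closed_loop"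
    if "(\<exists>r>0. \<exists>B. \<forall>x. norm x < r \<longrightarrow>
         \<bar>Inf {norm u + norm lam | u lam. (\<forall>i. g (x, u, lam) $ i \<ge> 0) \<and> h (x, u, lam) = 0}\<bar> \<le> B)
      \<or> (\<forall>x u lam u' lam'. V (x, u, lam) = V (x, u', lam'))"
    using that Lyapunov_stable_if_bounded_multipliers Lyapunov_stable_if_V_independent by auto
  then show ?thesis
    unfolding GAS_def traj Lyapunov_stable_def using orbit_tendsto_zero by blast
qed

end
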